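(* Let $(\lambda_k)_{k\ge1}$, $(\mu_k)_{k\ge1}$ be nonzero real numbers with $|\lambda_1|>|\mu_1|>|\lambda_2|>|\mu_2|>\dots>0$ and $\lambda_k\to0$, let $\sigma=\{\lambda_k^2:k\ge1\}\cup\{0\}$, and let $\Phi(z)=\prod_{k\ge1}\frac{z-\mu_k^2}{z-\lambda_k^2}$. Then $\Phi$ is the only function analytic in $\mathbb{C}\setminus\sigma$ satisfying all of the following: (1) $\Phi(\bar z)=\overline{\Phi(z)}$; (2) it has simple poles at the points $\lambda_k^2$, and its only zeros are simple zeros at the points $\mu_k^2$; (3) its limit as $z\to\infty$ equals $1$; (4) its imaginary part is strictly negative at every point of the open upper half-plane. *)

theory Defs
  imports "HOL-Complex_Analysis.Complex_Analysis"
begin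

text \<open>The sequences are indexed from 0 (the paper indexes from 1).\<close>

definition sigma_set :: "(nat \<Rightarrow> real) \<Rightarrow> complex set" where
  "sigma_set lam = insert 0 (range (\<lambda>k. complex_of_real ((lam k)\<^sup>2)))"

definition Phi :: "(nat \<Rightarrow> real) \<Rightarrow> (nat \<Rightarrow> real) \<Rightarrow> complex \<Rightarrow> complex" where
  "Phi lam mu z = (\<Prod>k. (z - complex_of_real ((mu k)\<^sup>2)) / (z - complex_of_real ((lam k)\<^sup>2)))"

definition Phi_props :: "(nat \<Rightarrow> real) \<Rightarrow> (nat \<Rightarrow> real) \<Rightarrow> (complex \<Rightarrow> complex) \<Rightarrow> bool" where
  "Phi_props lam mu f \<longleftrightarrow>
     f holomorphic_on (- sigma_set lam) \<and>
     (\<forall>z \<in> - sigma_set lam. f (cnj z) = cnj (f z)) \<and>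
     (\<forall>k. is_pole f (complex_of_real ((lam k)\<^sup>2)) \<and> zorder f (complex_of_real ((lam k)\<^sup>2)) = -1) \<and>
     (\<forall>z \<in> - sigma_set lam. f z = 0 \<longleftrightarrow> z \<in> range (\<lambda>k. complex_of_real ((mu k)\<^sup>2))) \<and>
     (\<forall>k. zorder f (complex_of_real ((mu k)\<^sup>2)) = 1) \<and>
     (f \<longlongrightarrow> 1) at_infinity \<and>
     (\<forall>z. Im z > 0 \<longrightarrow> Im (f z) < 0)"

end

theory Submission
  imports Defs
begin

text \<open>
  Interlacing gives \<open>\<bar>\<lambda>\<^sub>k\<^sup>2 - \<mu>\<^sub>k\<^sup>2\<bar> \<le> \<lambda>\<^sub>k\<^sup>2 - \<lambda>\<^sub>k\<^sub>+\<^sub>1\<^sup>2\<close>, a telescoping bound, so the product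
  converges locally uniformly off \<open>\<sigma>\<close>; symmetry, poles, zeros and the limit at infinity are read
  off the factors. For \<open>Im z > 0\<close> the argument of \<open>z - x\<close> increases with the real number \<open>x\<close>, so every
  factor has argument in \<open>(-pi, 0)\<close>, and by interlacing so does the whole product: \<open>Im \<Phi>(z) < 0\<close>.

  If \<open>f\<close> and \<open>g\<close> both have the properties, their poles and zeros cancel and \<open>f / g\<close> extends to a
  zero-free holomorphic \<open>G\<close> on \<open>\<complex> - {0}\<close> tending to 1 at infinity. The signs of \<open>Im f\<close> and
  \<open>Im g\<close> keep \<open>G\<close> off \<open>(-\<infinity>, 0]\<close> in the upper half-plane, symmetry does so in the lower one,
  and on the real axis \<open>G\<close> is real, zero-free and tends to 1, hence positive. So
  \<open>(\<surd>G - 1) / (\<surd>G + 1)\<close> is bounded by 1, extends over 0 and vanishes at infinity; by Liouville's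
  theorem it is 0, i.e. \<open>G = 1\<close>.
\<close>

section \<open>The set \<open>\<sigma>\<close>\<close>

lemma of_real_sq_in_sigma_set: "complex_of_real ((lam k)\<^sup>2) \<in> sigma_set lam"
  by (simp add: sigma_set_def)

lemma zero_in_sigma_set: "0 \<in> sigma_set lam"
  by (simp add: sigma_set_def)

lemma Im_sigma_set: "w \<in> sigma_set lam \<Longrightarrow> Im w = 0"
  by (auto simp: sigma_set_def simp del: of_real_power)

lemma cnj_in_sigma_set_iff: "cnj w \<in> sigma_set lam \<longleftrightarrow> w \<in> sigma_set lam"
  by (auto simp: sigma_set_def complex_eq_iff simp del: of_real_power)

lemma sigma_set_fun_upd: "sigma_set lam = insert (complex_of_real ((lam j)\<^sup>2)) (sigma_set (lam(j := 0)))"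
  by (auto simp: sigma_set_def simp del: of_real_power)

lemma compact_sigma_set:
  assumes "lam \<longlonglongrightarrow> 0"
  shows "compact (sigma_set lam)"
proof -
  have "(\<lambda>k. complex_of_real ((lam k)\<^sup>2)) \<longlonglongrightarrow> complex_of_real (0\<^sup>2)"
    by (intro tendsto_intros assms)
  thus ?thesis
    unfolding sigma_set_def by (intro compact_sequence_with_limit) simp
qed

lemma closed_sigma_set: "lam \<longlonglongrightarrow> 0 \<Longrightarrow> closed (sigma_set lam)"
  by (rule compact_imp_closed[OF compact_sigma_set])

lemma open_Compl_sigma_set: "lam \<longlonglongrightarrow> 0 \<Longrightarrow> open (- sigma_set lam)"
  using closed_sigma_set by blast

lemma eventually_not_in_sigma_set:
  assumes lim: "lam \<longlonglongrightarrow> 0" and "p \<noteq> 0"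
  shows "\<forall>\<^sub>F w in at p. w \<notin> sigma_set lam"
proof -
  txt \<open>Zeroing the entries with square \<open>p\<close> keeps the sequence null; its \<open>\<sigma>\<close> is closed and misses \<open>p\<close>.\<close>
  define lam' where "lam' = (\<lambda>k. if complex_of_real ((lam k)\<^sup>2) = p then 0 else lam k)"
  have "lam' \<longlonglongrightarrow> 0"
    unfolding lam'_def
    by (rule Lim_null_comparison[OF always_eventually tendsto_rabs_zero[OF lim]]) simp
  hence "open (- sigma_set lam')" by (rule open_Compl_sigma_set)
  moreover have "p \<notin> sigma_set lam'"
  proof -
    have "complex_of_real ((lam' k)\<^sup>2) \<noteq> p" for k
      using \<open>p \<noteq> 0\<close> unfolding lam'_def by (cases "complex_of_real ((lam k)\<^sup>2) = p") simp_all
    thus ?thesis using \<open>p \<noteq> 0\<close> unfolding sigma_set_def by blast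
  qed
  ultimately have "\<forall>\<^sub>F w in nhds p. w \<in> - sigma_set lam'"
    by (intro eventually_nhds_in_open) auto
  moreover have "sigma_set lam \<subseteq> insert p (sigma_set lam')"
    unfolding sigma_set_def lam'_def by auto
  ultimately show ?thesis
    unfolding eventually_at_filter by (auto elim: eventually_mono)
qed

section \<open>The product \<open>\<Phi>\<close>\<close>

definition Phi_factor :: "(nat \<Rightarrow> real) \<Rightarrow> (nat \<Rightarrow> real) \<Rightarrow> nat \<Rightarrow> complex \<Rightarrow> complex" where
  "Phi_factor lam mu k z = (z - complex_of_real ((mu k)\<^sup>2)) / (z - complex_of_real ((lam k)\<^sup>2))"

lemma Phi_eq_prodinf: "Phi lam mu z = (\<Prod>k. Phi_factor lam mu k z)"
  by (simp add: Phi_def Phi_factor_def)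

lemma norm_Phi_factor_minus_1_le:
  assumes "d > 0" "d \<le> norm (w - complex_of_real ((lam k)\<^sup>2))"
  shows "norm (Phi_factor lam mu k w - 1) \<le> \<bar>(lam k)\<^sup>2 - (mu k)\<^sup>2\<bar> / d"
proof -
  have "w - complex_of_real ((lam k)\<^sup>2) \<noteq> 0" using assms by auto
  hence "Phi_factor lam mu k w - 1 =
      complex_of_real ((lam k)\<^sup>2 - (mu k)\<^sup>2) / (w - complex_of_real ((lam k)\<^sup>2))"
    by (simp add: Phi_factor_def field_simps)
  hence "norm (Phi_factor lam mu k w - 1) =
      \<bar>(lam k)\<^sup>2 - (mu k)\<^sup>2\<bar> / norm (w - complex_of_real ((lam k)\<^sup>2))"
    by (simp only: norm_divide norm_of_real)
  also have "\<dots> \<le> \<bar>(lam k)\<^sup>2 - (mu k)\<^sup>2\<bar> / d"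
    using assms by (intro divide_left_mono mult_pos_pos) auto
  finally show ?thesis .
qed

locale Phi_product =
  fixes lam mu :: "nat \<Rightarrow> real"
  assumes summable_diff: "summable (\<lambda>k. \<bar>(lam k)\<^sup>2 - (mu k)\<^sup>2\<bar>)"
    and lam_lim: "lam \<longlonglongrightarrow> 0"
begin

lemma cball_away_from_sigma_set:
  assumes "z \<notin> sigma_set lam"
  obtains e where "e > 0" "cball z e \<subseteq> - sigma_set lam"
    "\<And>w k. w \<in> cball z e \<Longrightarrow> e \<le> norm (w - complex_of_real ((lam k)\<^sup>2))"
proof -
  obtain e where e: "e > 0" "cball z (2 * e) \<subseteq> - sigma_set lam"
  proof -
    obtain r where "r > 0" "cball z r \<subseteq> - sigma_set lam"
      using open_Compl_sigma_set[OF lam_lim] assms open_contains_cball by (metis ComplI)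
    thus ?thesis using that[of "r / 2"] by simp
  qed
  have "e \<le> norm (w - complex_of_real ((lam k)\<^sup>2))" if "w \<in> cball z e" for w k
  proof (rule ccontr)
    assume "\<not> ?thesis"
    hence "dist z (complex_of_real ((lam k)\<^sup>2)) \<le> 2 * e"
      using that norm_triangle_ineq[of "z - w" "w - complex_of_real ((lam k)\<^sup>2)"]
      by (simp add: dist_norm norm_minus_commute)
    thus False using e(2) of_real_sq_in_sigma_set[of lam k] by auto
  qed
  moreover have "cball z e \<subseteq> - sigma_set lam"
    using e subset_cball[of e "2 * e" z] by auto
  ultimately show ?thesis using that e(1) by blast
qed

lemma uniformly_convergent_Phi_partial:
  assumes "z \<notin> sigma_set lam"
  obtains e where "e > 0" "cball z e \<subseteq> - sigma_set lam"
    "uniformly_convergent_on (cball z e) (\<lambda>n w. \<Prod>k<n. Phi_factor lam mu k w)"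
proof -
  obtain e where e: "e > 0" "cball z e \<subseteq> - sigma_set lam"
    and away: "\<And>w k. w \<in> cball z e \<Longrightarrow> e \<le> norm (w - complex_of_real ((lam k)\<^sup>2))"
    using cball_away_from_sigma_set[OF assms] by blast
  have "uniformly_convergent_on (cball z e) (\<lambda>n w. \<Prod>k<n. Phi_factor lam mu k w)"
  proof (rule uniformly_convergent_on_prod')
    show "continuous_on (cball z e) (Phi_factor lam mu k)" for k
      unfolding Phi_factor_def using away e(1)
      by (intro continuous_intros) (auto simp del: of_real_power dest!: away[of _ k])
    show "uniformly_convergent_on (cball z e) (\<lambda>n w. \<Sum>k<n. norm (Phi_factor lam mu k w - 1))"
      using away e(1) norm_Phi_factor_minus_1_le
      by (intro Weierstrass_m_test'[of _ _ "\<lambda>k. \<bar>(lam k)\<^sup>2 - (mu k)\<^sup>2\<bar> / e"])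
         (auto intro: summable_divide summable_diff)
  qed simp
  thus ?thesis using that e by blast
qed

lemma convergent_prod_Phi_factor:
  assumes "z \<notin> sigma_set lam"
  shows "convergent_prod (\<lambda>k. Phi_factor lam mu k z)"
proof -
  obtain e where e: "e > 0" "cball z e \<subseteq> - sigma_set lam"
    and away: "\<And>w k. w \<in> cball z e \<Longrightarrow> e \<le> norm (w - complex_of_real ((lam k)\<^sup>2))"
    using cball_away_from_sigma_set[OF assms] by blast
  have "summable (\<lambda>k. norm (Phi_factor lam mu k z - 1))"
    using e away[of z] norm_Phi_factor_minus_1_le
    by (intro summable_comparison_test'[OF summable_divide[OF summable_diff, of e]]) auto
  thus ?thesis
    by (intro abs_convergent_prod_imp_convergent_prod summable_imp_abs_convergent_prod)
qed

lemma Phi_has_prod: "z \<notin> sigma_set lam \<Longrightarrow> (\<lambda>k. Phi_factor lam mu k z) has_prod Phi lam mu z"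
  using convergent_prod_has_prod[OF convergent_prod_Phi_factor] by (simp add: Phi_eq_prodinf)

lemma Phi_LIMSEQ:
  assumes "z \<notin> sigma_set lam"
  shows "(\<lambda>n. \<Prod>k<n. Phi_factor lam mu k z) \<longlonglongrightarrow> Phi lam mu z"
  using convergent_prod_LIMSEQ[OF convergent_prod_Phi_factor[OF assms]]
    LIMSEQ_lessThan_iff_atMost[of "\<lambda>A. \<Prod>k\<in>A. Phi_factor lam mu k z"]
  by (simp add: Phi_eq_prodinf)

lemma holomorphic_Phi: "Phi lam mu holomorphic_on - sigma_set lam"
proof (rule holomorphic_uniform_sequence[OF open_Compl_sigma_set[OF lam_lim]])
  show "(\<lambda>w. \<Prod>k<n. Phi_factor lam mu k w) holomorphic_on - sigma_set lam" for n
    unfolding Phi_factor_def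
    by (intro holomorphic_intros) (auto simp: of_real_sq_in_sigma_set simp del: of_real_power)
  fix z assume "z \<in> - sigma_set lam"
  then obtain e where e: "e > 0" "cball z e \<subseteq> - sigma_set lam"
    and conv: "uniformly_convergent_on (cball z e) (\<lambda>n w. \<Prod>k<n. Phi_factor lam mu k w)"
    using uniformly_convergent_Phi_partial by blast
  then obtain g where g: "uniform_limit (cball z e) (\<lambda>n w. \<Prod>k<n. Phi_factor lam mu k w) g sequentially"
    by (auto simp: uniformly_convergent_on_def)
  moreover have "g w = Phi lam mu w" if "w \<in> cball z e" for w
    using tendsto_uniform_limitI[OF g that] Phi_LIMSEQ[of w] e(2) that
    by (metis ComplD LIMSEQ_unique subsetD)
  ultimately have "uniform_limit (cball z e) (\<lambda>n w. \<Prod>k<n. Phi_factor lam mu k w) (Phi lam mu) sequentially"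
    using uniform_limit_cong' by metis
  thus "\<exists>d>0. cball z d \<subseteq> - sigma_set lam \<and>
      uniform_limit (cball z d) (\<lambda>n w. \<Prod>k<n. Phi_factor lam mu k w) (Phi lam mu) sequentially"
    using e by blast
qed

lemma Phi_cnj:
  assumes "z \<notin> sigma_set lam"
  shows "Phi lam mu (cnj z) = cnj (Phi lam mu z)"
proof -
  have "(\<lambda>n. cnj (\<Prod>k<n. Phi_factor lam mu k z)) \<longlonglongrightarrow> cnj (Phi lam mu z)"
    by (intro tendsto_intros Phi_LIMSEQ assms)
  moreover have "(\<lambda>n. cnj (\<Prod>k<n. Phi_factor lam mu k z)) = (\<lambda>n. \<Prod>k<n. Phi_factor lam mu k (cnj z))"
    by (simp add: Phi_factor_def)
  moreover have "cnj z \<notin> sigma_set lam"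
    using assms by (simp add: cnj_in_sigma_set_iff)
  ultimately show ?thesis
    using Phi_LIMSEQ LIMSEQ_unique by metis
qed

lemma Phi_eq_0_iff:
  assumes "z \<notin> sigma_set lam"
  shows "Phi lam mu z = 0 \<longleftrightarrow> z \<in> range (\<lambda>k. complex_of_real ((mu k)\<^sup>2))"
proof -
  have "z \<noteq> complex_of_real ((lam k)\<^sup>2)" for k
    using assms of_real_sq_in_sigma_set by metis
  hence "Phi_factor lam mu k z = 0 \<longleftrightarrow> z = complex_of_real ((mu k)\<^sup>2)" for k
    by (simp add: Phi_factor_def)
  thus ?thesis
    using has_prod_eq_0_iff[OF Phi_has_prod[OF assms]] by (metis (no_types, lifting) image_iff)
qed

lemma norm_Phi_minus_1_le:
  assumes B: "B > 0" "\<And>w. w \<in> sigma_set lam \<Longrightarrow> norm w \<le> B" and z: "2 * B \<le> norm z"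
  shows "norm (Phi lam mu z - 1) \<le> exp (2 * (\<Sum>k. \<bar>(lam k)\<^sup>2 - (mu k)\<^sup>2\<bar>) / norm z) - 1"
proof -
  define C where "C = (\<Sum>k. \<bar>(lam k)\<^sup>2 - (mu k)\<^sup>2\<bar>)"
  have d: "norm z / 2 > 0" using z B by linarith
  have away: "norm z / 2 \<le> norm (z - complex_of_real ((lam k)\<^sup>2))" for k
    using B(2)[OF of_real_sq_in_sigma_set[of lam k]] norm_triangle_ineq2[of z "complex_of_real ((lam k)\<^sup>2)"] z
    by linarith
  have "z \<notin> sigma_set lam"
  proof
    assume "z \<in> sigma_set lam"
    from B(2)[OF this] B(1) z show False by linarith
  qed
  have "norm ((\<Prod>k<n. Phi_factor lam mu k z) - 1) \<le> exp (2 * C / norm z) - 1" for n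
  proof -
    have "norm ((\<Prod>k<n. 1 + (Phi_factor lam mu k z - 1)) - 1)
        \<le> (\<Prod>k<n. 1 + norm (Phi_factor lam mu k z - 1)) - 1"
      by (rule norm_prod_minus1_le_prod_minus1)
    also have "(\<Prod>k<n. 1 + norm (Phi_factor lam mu k z - 1)) \<le> exp (\<Sum>k<n. norm (Phi_factor lam mu k z - 1))"
      by (rule prod_le_exp_sum) auto
    also have "(\<Sum>k<n. norm (Phi_factor lam mu k z - 1)) \<le> (\<Sum>k<n. \<bar>(lam k)\<^sup>2 - (mu k)\<^sup>2\<bar>) / (norm z / 2)"
      unfolding sum_divide_distrib by (intro sum_mono norm_Phi_factor_minus_1_le d away)
    also have "(\<Sum>k<n. \<bar>(lam k)\<^sup>2 - (mu k)\<^sup>2\<bar>) \<le> C"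
      unfolding C_def by (intro sum_le_suminf summable_diff) auto
    finally show ?thesis using d by (simp add: divide_right_mono mult.commute)
  qed
  moreover have "(\<lambda>n. norm ((\<Prod>k<n. Phi_factor lam mu k z) - 1)) \<longlonglongrightarrow> norm (Phi lam mu z - 1)"
    by (intro tendsto_intros Phi_LIMSEQ \<open>z \<notin> sigma_set lam\<close>)
  ultimately show ?thesis unfolding C_def by (intro LIMSEQ_le_const2) auto
qed

lemma Phi_tendsto_1: "(Phi lam mu \<longlongrightarrow> 1) at_infinity"
proof -
  obtain B where B: "B > 0" "\<And>w. w \<in> sigma_set lam \<Longrightarrow> norm w \<le> B"
    using compact_imp_bounded[OF compact_sigma_set[OF lam_lim]] bounded_pos by blast
  define C where "C = (\<Sum>k. \<bar>(lam k)\<^sup>2 - (mu k)\<^sup>2\<bar>)"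
  have ev: "\<forall>\<^sub>F z in at_infinity. norm (Phi lam mu z - 1) \<le> exp (2 * C / norm z) - 1"
    unfolding eventually_at_infinity C_def using norm_Phi_minus_1_le[OF B] by blast
  have "((\<lambda>z::complex. 2 * C / norm z) \<longlongrightarrow> 0) at_infinity"
    by (rule tendsto_divide_0[OF tendsto_const filterlim_at_top_imp_at_infinity[OF filterlim_norm_at_top]])
  hence "((\<lambda>z::complex. exp (2 * C / norm z) - 1) \<longlongrightarrow> 0) at_infinity"
    using tendsto_diff[OF tendsto_exp tendsto_const[of 1]] by fastforce
  hence "((\<lambda>z. Phi lam mu z - 1) \<longlongrightarrow> 0) at_infinity"
    by (rule Lim_null_comparison[OF ev])
  thus ?thesis by (simp add: LIM_zero_iff)
qed

lemma Phi_product_fun_upd: "Phi_product (lam(j := 0)) (mu(j := 0))"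
proof
  show "summable (\<lambda>k. \<bar>((lam(j := 0)) k)\<^sup>2 - ((mu(j := 0)) k)\<^sup>2\<bar>)"
    by (rule summable_comparison_test'[OF summable_diff]) auto
  have "\<forall>\<^sub>F k in sequentially. lam k = (lam(j := 0)) k"
    using eventually_gt_at_top[of j] by eventually_elim auto
  thus "lam(j := 0) \<longlonglongrightarrow> 0" by (rule Lim_transform_eventually[OF lam_lim])
qed

text \<open>Replacing the \<open>j\<close>-th pole and zero by 0 turns the \<open>j\<close>-th factor into 1 away from 0.\<close>
lemma Phi_split_factor:
  assumes "z \<notin> sigma_set lam"
  shows "Phi lam mu z = Phi_factor lam mu j z * Phi (lam(j := 0)) (mu(j := 0)) z"
proof -
  interpret rest: Phi_product "lam(j := 0)" "mu(j := 0)" by (rule Phi_product_fun_upd)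
  have "z \<noteq> 0" using assms zero_in_sigma_set by metis
  have "z \<notin> sigma_set (lam(j := 0))" using assms sigma_set_fun_upd[of lam j] by blast
  hence "(\<lambda>k. (if k = j then Phi_factor lam mu k z else 1) * Phi_factor (lam(j := 0)) (mu(j := 0)) k z)
      has_prod (Phi_factor lam mu j z * Phi (lam(j := 0)) (mu(j := 0)) z)"
    by (intro has_prod_mult has_prod_single rest.Phi_has_prod)
  also have "(\<lambda>k. (if k = j then Phi_factor lam mu k z else 1) * Phi_factor (lam(j := 0)) (mu(j := 0)) k z)
      = (\<lambda>k. Phi_factor lam mu k z)"
    using \<open>z \<noteq> 0\<close> by (auto simp: Phi_factor_def)
  finally show ?thesis using Phi_has_prod[OF assms] has_prod_unique2 by blast
qed

end

section \<open>Interlacing poles and zeros\<close>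

text \<open>For \<open>Im z > 0\<close> this is the argument of \<open>z - x\<close> in \<open>(0, pi)\<close>, written so that its
  monotonicity in \<open>x\<close> is evident.\<close>
definition upper_arg :: "complex \<Rightarrow> real \<Rightarrow> real" where
  "upper_arg z x = pi / 2 - arctan ((Re z - x) / Im z)"

lemma upper_arg_polar:
  assumes "Im z > 0"
  shows "z - complex_of_real x = complex_of_real (cmod (z - complex_of_real x)) * cis (upper_arg z x)"
proof -
  define t where "t = (Re z - x) / Im z"
  define s where "s = sqrt (1 + t\<^sup>2)"
  have s: "s > 0" by (simp add: s_def add_pos_nonneg)
  have rx: "Re z - x = Im z * t" using assms by (simp add: t_def)
  have "cmod (z - complex_of_real x) = sqrt ((Im z)\<^sup>2 * (1 + t\<^sup>2))"
    by (simp add: cmod_def rx power_mult_distrib algebra_simps)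
  also have "\<dots> = Im z * s"
    using assms by (simp add: real_sqrt_mult s_def)
  finally have n: "cmod (z - complex_of_real x) = Im z * s" .
  have "cos (upper_arg z x) = t / s" "sin (upper_arg z x) = 1 / s"
    by (simp_all add: upper_arg_def cos_diff sin_diff sin_arctan cos_arctan t_def s_def)
  thus ?thesis
    using s rx by (intro complex_eqI) (simp_all add: n)
qed

lemma upper_arg_bounds: "Im z > 0 \<Longrightarrow> 0 < upper_arg z x \<and> upper_arg z x < pi"
  using arctan_lbound[of "(Re z - x) / Im z"] arctan_ubound[of "(Re z - x) / Im z"]
  by (simp add: upper_arg_def)

lemma upper_arg_strict_mono:
  assumes "Im z > 0" "x < y"
  shows "upper_arg z x < upper_arg z y"
proof -
  have "(Re z - y) / Im z < (Re z - x) / Im z"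
    using assms by (intro divide_strict_right_mono) auto
  thus ?thesis by (simp add: upper_arg_def arctan_less_iff)
qed

lemma interlacing_angle_suminf:
  fixes \<theta> :: "real \<Rightarrow> real" and a b :: "nat \<Rightarrow> real"
  assumes mono: "\<And>x y. x < y \<Longrightarrow> \<theta> x < \<theta> y" and range: "\<And>x. 0 < \<theta> x \<and> \<theta> x < pi"
    and b_pos: "\<And>k. 0 < b k" and ba: "\<And>k. b k < a k" and ab: "\<And>k. a (Suc k) < b k"
  defines "d \<equiv> \<lambda>k. \<theta> (b k) - \<theta> (a k)"
  shows "summable d" and "- pi < (\<Sum>k. d k)" and "(\<Sum>k. d k) < 0"
proof -
  have d_neg: "d k < 0" for k
    using mono[OF ba] by (simp add: d_def)
  have lower: "\<theta> 0 - \<theta> (a 0) \<le> (\<Sum>k<n. d k)" for n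
  proof (cases n)
    case (Suc m)
    have "\<theta> (b m) - \<theta> (a 0) \<le> (\<Sum>k<Suc m. d k)" for m
    proof (induction m)
      case (Suc m)
      thus ?case using mono[OF ab[of m]] by (simp add: d_def)
    qed (simp add: d_def)
    from this[of m] show ?thesis unfolding Suc using mono[OF b_pos[of m]] by linarith
  qed (use mono[OF order.strict_trans[OF b_pos ba], of 0] in \<open>simp add: less_imp_le\<close>)
  have "summable (\<lambda>k. - d k)"
  proof (rule summableI_nonneg_bounded)
    show "0 \<le> - d k" for k using d_neg[of k] by simp
    show "(\<Sum>k<n. - d k) \<le> \<theta> (a 0) - \<theta> 0" for n
      using lower[of n] by (simp add: sum_negf)
  qed
  thus "summable d" by (simp add: summable_minus_iff)
  have "- pi < \<theta> 0 - \<theta> (a 0)"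
    using range[of 0] range[of "a 0"] by linarith
  also have "\<dots> \<le> (\<Sum>k. d k)"
    using lower by (intro LIMSEQ_le_const[OF summable_LIMSEQ[OF \<open>summable d\<close>]]) auto
  finally show "- pi < (\<Sum>k. d k)" .
  show "(\<Sum>k. d k) < 0"
    using suminf_pos[OF \<open>summable (\<lambda>k. - d k)\<close>] d_neg suminf_minus[OF \<open>summable d\<close>] by simp
qed

lemma prod_cis: "(\<Prod>k\<in>A. cis (f k)) = cis (\<Sum>k\<in>A. f k)"
  by (induction A rule: infinite_finite_induct) (auto simp: cis_mult)

lemma prod_polar:
  assumes "\<And>k. k \<in> A \<Longrightarrow> w k = complex_of_real (cmod (w k)) * cis (s k)"
  shows "(\<Prod>k\<in>A. w k) = complex_of_real (cmod (\<Prod>k\<in>A. w k)) * cis (\<Sum>k\<in>A. s k)"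
proof -
  have "(\<Prod>k\<in>A. w k) = (\<Prod>k\<in>A. complex_of_real (cmod (w k)) * cis (s k))"
    using assms by (rule prod.cong[OF refl])
  also have "\<dots> = complex_of_real (\<Prod>k\<in>A. cmod (w k)) * cis (\<Sum>k\<in>A. s k)"
    by (simp only: prod.distrib of_real_prod prod_cis)
  finally show ?thesis by (simp only: prod_norm)
qed

lemma LIMSEQ_polar:
  assumes "w \<longlonglongrightarrow> W" "s \<longlonglongrightarrow> S" "\<And>n. w n = complex_of_real (cmod (w n)) * cis (s n)"
  shows "W = complex_of_real (cmod W) * cis S"
proof -
  have "w = (\<lambda>n. complex_of_real (cmod (w n)) * cis (s n))"
    using assms(3) by (rule ext)
  also have "\<dots> \<longlonglongrightarrow> complex_of_real (cmod W) * cis S"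
    by (intro tendsto_intros assms(1,2))
  finally show ?thesis using assms(1) LIMSEQ_unique by blast
qed

lemma Phi_factor_polar:
  assumes "Im z > 0"
  shows "Phi_factor lam mu k z = complex_of_real (cmod (Phi_factor lam mu k z)) *
    cis (upper_arg z ((mu k)\<^sup>2) - upper_arg z ((lam k)\<^sup>2))"
proof -
  have "Phi_factor lam mu k z =
      complex_of_real (cmod (z - complex_of_real ((mu k)\<^sup>2)) / cmod (z - complex_of_real ((lam k)\<^sup>2))) *
      cis (upper_arg z ((mu k)\<^sup>2) - upper_arg z ((lam k)\<^sup>2))"
    unfolding Phi_factor_def
    by (subst (1 2) upper_arg_polar[OF assms]) (simp add: cis_divide[symmetric] field_simps)
  also have "cmod (z - complex_of_real ((mu k)\<^sup>2)) / cmod (z - complex_of_real ((lam k)\<^sup>2))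
      = cmod (Phi_factor lam mu k z)"
    by (simp add: Phi_factor_def norm_divide)
  finally show ?thesis .
qed

locale interlacing =
  fixes lam mu :: "nat \<Rightarrow> real"
  assumes lam_nonzero: "\<And>k. lam k \<noteq> 0" and mu_nonzero: "\<And>k. mu k \<noteq> 0"
    and abs_mu_less: "\<And>k. \<bar>mu k\<bar> < \<bar>lam k\<bar>"
    and abs_lam_Suc_less: "\<And>k. \<bar>lam (Suc k)\<bar> < \<bar>mu k\<bar>"
    and lam_tendsto_0: "lam \<longlonglongrightarrow> 0"
begin

lemma mu_sq_less: "(mu k)\<^sup>2 < (lam k)\<^sup>2"
  using abs_mu_less[of k] by (rule power2_strict_mono)

lemma lam_Suc_sq_less: "(lam (Suc k))\<^sup>2 < (mu k)\<^sup>2"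
  using abs_lam_Suc_less[of k] by (rule power2_strict_mono)

lemma lam_sq_strict_antimono:
  assumes "k < j"
  shows "(lam j)\<^sup>2 < (lam k)\<^sup>2"
proof -
  have "- (lam k)\<^sup>2 < - (lam (Suc k))\<^sup>2" for k
    using mu_sq_less[of k] lam_Suc_sq_less[of k] by simp
  from lift_Suc_mono_less[of "\<lambda>k. - (lam k)\<^sup>2", OF this assms] show ?thesis by simp
qed

lemma lam_sq_antimono: "k \<le> j \<Longrightarrow> (lam j)\<^sup>2 \<le> (lam k)\<^sup>2"
  using lam_sq_strict_antimono[of k j] by (cases "k = j") auto

lemma mu_sq_strict_antimono: "k < j \<Longrightarrow> (mu j)\<^sup>2 < (mu k)\<^sup>2"
  using mu_sq_less[of j] lam_sq_antimono[of "Suc k" j] lam_Suc_sq_less[of k] by simp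

lemma lam_sq_eq_iff: "(lam j)\<^sup>2 = (lam k)\<^sup>2 \<longleftrightarrow> j = k"
  using lam_sq_strict_antimono[of j k] lam_sq_strict_antimono[of k j]
  by (cases j k rule: linorder_cases) auto

lemma mu_sq_eq_iff: "(mu j)\<^sup>2 = (mu k)\<^sup>2 \<longleftrightarrow> j = k"
  using mu_sq_strict_antimono[of j k] mu_sq_strict_antimono[of k j]
  by (cases j k rule: linorder_cases) auto

lemma lam_sq_ne_mu_sq: "(lam j)\<^sup>2 \<noteq> (mu k)\<^sup>2"
proof (cases j k rule: linorder_cases)
  case less
  thus ?thesis
    using mu_sq_less[of k] lam_sq_antimono[of "Suc j" k] lam_Suc_sq_less[of j] mu_sq_less[of j] by simp
next
  case greater
  thus ?thesis using lam_sq_antimono[of "Suc k" j] lam_Suc_sq_less[of k] by simp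
qed (use mu_sq_less in \<open>simp add: less_imp_neq[symmetric]\<close>)

lemma mu_tendsto_0: "mu \<longlonglongrightarrow> 0"
  by (rule Lim_null_comparison[OF always_eventually tendsto_rabs_zero[OF lam_tendsto_0]])
     (use abs_mu_less less_imp_le in auto)

lemma summable_sq_diff: "summable (\<lambda>k. \<bar>(lam k)\<^sup>2 - (mu k)\<^sup>2\<bar>)"
proof (rule summable_comparison_test')
  have "(\<lambda>k. (lam k)\<^sup>2) \<longlonglongrightarrow> 0\<^sup>2" by (intro tendsto_intros lam_tendsto_0)
  hence "(\<lambda>k. (lam k)\<^sup>2 - (lam (Suc k))\<^sup>2) sums ((lam 0)\<^sup>2 - 0)"
    by (intro telescope_sums') simp
  thus "summable (\<lambda>k. (lam k)\<^sup>2 - (lam (Suc k))\<^sup>2)" by (rule sums_summable)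
  show "norm \<bar>(lam k)\<^sup>2 - (mu k)\<^sup>2\<bar> \<le> (lam k)\<^sup>2 - (lam (Suc k))\<^sup>2" for k
    using mu_sq_less[of k] lam_Suc_sq_less[of k] by simp
qed

sublocale Phi_product lam mu
  by unfold_locales (fact summable_sq_diff lam_tendsto_0)+

lemma sigma_set_fun_upd_avoids:
  assumes "p = complex_of_real ((lam j)\<^sup>2) \<or> p = complex_of_real ((mu j)\<^sup>2)"
  shows "p \<notin> sigma_set (lam(j := 0))"
proof
  assume "p \<in> sigma_set (lam(j := 0))"
  then consider "p = 0" | k where "k \<noteq> j" "p = complex_of_real ((lam k)\<^sup>2)"
    unfolding sigma_set_def by (auto split: if_splits)
  thus False
  proof cases
    case 1 thus False using assms lam_nonzero[of j] mu_nonzero[of j] by auto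
  next
    case 2 thus False using assms lam_sq_eq_iff[of k j] lam_sq_ne_mu_sq[of k j] by (auto simp del: of_real_power)
  qed
qed

lemma Phi_fun_upd_nonzero:
  assumes "p = complex_of_real ((lam j)\<^sup>2) \<or> p = complex_of_real ((mu j)\<^sup>2)"
  shows "Phi (lam(j := 0)) (mu(j := 0)) p \<noteq> 0"
proof -
  interpret rest: Phi_product "lam(j := 0)" "mu(j := 0)" by (rule Phi_product_fun_upd)
  have "p \<noteq> complex_of_real (((mu(j := 0)) k)\<^sup>2)" for k
    using assms lam_nonzero[of j] mu_nonzero[of j] lam_sq_ne_mu_sq[of j k] mu_sq_eq_iff[of j k]
    by (cases "k = j") (auto simp del: of_real_power)
  thus ?thesis
    using rest.Phi_eq_0_iff[OF sigma_set_fun_upd_avoids[OF assms]] by blast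
qed

lemma Phi_pole:
  shows "is_pole (Phi lam mu) (complex_of_real ((lam j)\<^sup>2))"
    and "zorder (Phi lam mu) (complex_of_real ((lam j)\<^sup>2)) = -1"
proof -
  interpret rest: Phi_product "lam(j := 0)" "mu(j := 0)" by (rule Phi_product_fun_upd)
  define p q where "p = complex_of_real ((lam j)\<^sup>2)" and "q = complex_of_real ((mu j)\<^sup>2)"
  define S where "S = - sigma_set (lam(j := 0))"
  define h where "h = (\<lambda>w. (w - q) * Phi (lam(j := 0)) (mu(j := 0)) w)"
  have S: "open S" "p \<in> S"
    using open_Compl_sigma_set[OF rest.lam_lim] sigma_set_fun_upd_avoids by (auto simp: S_def p_def)
  have h: "h holomorphic_on S" "h p \<noteq> 0"
    using rest.holomorphic_Phi Phi_fun_upd_nonzero lam_sq_ne_mu_sq[of j j]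
    by (auto simp: h_def S_def p_def q_def intro!: holomorphic_intros simp del: of_real_power)
  have Phi_eq: "Phi lam mu w = h w / (w - p)" if "w \<in> S" "w \<noteq> p" for w
  proof -
    have "w \<notin> sigma_set lam" using that sigma_set_fun_upd[of lam j] by (auto simp: S_def p_def)
    thus ?thesis by (simp add: Phi_split_factor[of _ j] Phi_factor_def h_def p_def q_def)
  qed
  have "\<forall>\<^sub>F w in at p. h w / (w - p) ^ 1 = Phi lam mu w"
    using eventually_at_in_open[OF S] by eventually_elim (simp add: Phi_eq)
  thus "is_pole (Phi lam mu) (complex_of_real ((lam j)\<^sup>2))"
    using is_pole_transform[OF is_pole_basic[OF h(1) S h(2) zero_less_one]] unfolding p_def by blast
  have "zorder (Phi lam mu) p = -1"
    using Phi_eq by (intro zorder_eqI[OF S h]) (simp add: power_int_minus divide_inverse)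
  thus "zorder (Phi lam mu) (complex_of_real ((lam j)\<^sup>2)) = -1" by (simp add: p_def)
qed

lemma zorder_Phi_zero: "zorder (Phi lam mu) (complex_of_real ((mu j)\<^sup>2)) = 1"
proof -
  interpret rest: Phi_product "lam(j := 0)" "mu(j := 0)" by (rule Phi_product_fun_upd)
  define p q where "p = complex_of_real ((lam j)\<^sup>2)" and "q = complex_of_real ((mu j)\<^sup>2)"
  define h where "h = (\<lambda>w. Phi (lam(j := 0)) (mu(j := 0)) w / (w - p))"
  have S: "open (- sigma_set lam)" "q \<in> - sigma_set lam"
    using open_Compl_sigma_set[OF lam_tendsto_0] sigma_set_fun_upd_avoids[of q j] sigma_set_fun_upd[of lam j]
      lam_sq_ne_mu_sq[of j j]
    by (auto simp: q_def simp del: of_real_power)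
  have sub: "- sigma_set lam \<subseteq> - sigma_set (lam(j := 0))" "p \<notin> - sigma_set lam"
    using sigma_set_fun_upd[of lam j] by (auto simp: p_def)
  have h: "h holomorphic_on - sigma_set lam" "h q \<noteq> 0"
    using holomorphic_on_subset[OF rest.holomorphic_Phi sub(1)] sub(2)
      Phi_fun_upd_nonzero[of q j] lam_sq_ne_mu_sq[of j j]
    by (auto simp: h_def p_def q_def intro!: holomorphic_intros simp del: of_real_power)
  show ?thesis
    unfolding q_def[symmetric]
  proof (rule zorder_eqI[OF S h])
    fix w assume "w \<in> - sigma_set lam"
    thus "Phi lam mu w = h w * (w - q) powi 1"
      by (simp add: Phi_split_factor[of _ j] Phi_factor_def h_def p_def q_def)
  qed
qed

lemma Im_Phi_neg:
  assumes z: "Im z > 0"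
  shows "Im (Phi lam mu z) < 0"
proof -
  define d where "d k = upper_arg z ((mu k)\<^sup>2) - upper_arg z ((lam k)\<^sup>2)" for k
  have z_notin: "z \<notin> sigma_set lam" using Im_sigma_set z by fastforce
  have angles: "summable d" "- pi < (\<Sum>k. d k)" "(\<Sum>k. d k) < 0"
    using interlacing_angle_suminf[of "upper_arg z" "\<lambda>k. (mu k)\<^sup>2" "\<lambda>k. (lam k)\<^sup>2"]
      upper_arg_strict_mono[OF z] upper_arg_bounds[OF z] mu_nonzero mu_sq_less lam_Suc_sq_less
    unfolding d_def by auto
  have "(\<Prod>k<n. Phi_factor lam mu k z) =
      complex_of_real (cmod (\<Prod>k<n. Phi_factor lam mu k z)) * cis (\<Sum>k<n. d k)" for n
    by (rule prod_polar) (unfold d_def, rule Phi_factor_polar[OF z])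
  hence "Phi lam mu z = complex_of_real (cmod (Phi lam mu z)) * cis (\<Sum>k. d k)"
    by (rule LIMSEQ_polar[OF Phi_LIMSEQ[OF z_notin] summable_LIMSEQ[OF angles(1)]])
  from arg_cong[where f = Im, OF this]
  have "Im (Phi lam mu z) = cmod (Phi lam mu z) * sin (\<Sum>k. d k)" by simp
  moreover have "Phi lam mu z \<noteq> 0"
    using Phi_eq_0_iff[OF z_notin] z by auto
  moreover have "sin (\<Sum>k. d k) < 0"
    using sin_gt_zero[of "- (\<Sum>k. d k)"] angles(2,3) by simp
  ultimately show ?thesis by (simp add: mult_pos_neg)
qed

theorem Phi_props_Phi: "Phi_props lam mu (Phi lam mu)"
  unfolding Phi_props_def
  using holomorphic_Phi Phi_cnj Phi_pole zorder_Phi_zero Phi_eq_0_iff Phi_tendsto_1 Im_Phi_neg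
  by auto

end

section \<open>Uniqueness\<close>

lemma Re_csqrt_pos:
  assumes "z \<notin> \<real>\<^sub>\<le>\<^sub>0"
  shows "Re (csqrt z) > 0"
proof (rule ccontr)
  assume "\<not> Re (csqrt z) > 0"
  hence "Re (csqrt z) = 0" using Re_csqrt[of z] by simp
  hence "(csqrt z)\<^sup>2 = - complex_of_real ((Im (csqrt z))\<^sup>2)"
    by (simp add: power2_eq_square complex_eq_iff)
  hence "z = - complex_of_real ((Im (csqrt z))\<^sup>2)" by simp
  also have "\<dots> \<in> \<real>\<^sub>\<le>\<^sub>0" by (simp add: complex_nonpos_Reals_iff)
  finally show False using assms by simp
qed

lemma Liouville_slit_punctured:
  fixes G :: "complex \<Rightarrow> complex"
  assumes holo: "G holomorphic_on - {0}" and slit: "\<And>w. w \<noteq> 0 \<Longrightarrow> G w \<notin> \<real>\<^sub>\<le>\<^sub>0"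
    and lim: "(G \<longlongrightarrow> 1) at_infinity" and "w \<noteq> 0"
  shows "G w = 1"
proof -
  define s where "s = (\<lambda>w. csqrt (G w))"
  define H where "H = (\<lambda>w. (s w - 1) / (s w + 1))"
  have Re_s: "Re (s w) > 0" if "w \<noteq> 0" for w
    unfolding s_def using Re_csqrt_pos[OF slit[OF that]] .
  have den: "s w + 1 \<noteq> 0" if "w \<noteq> 0" for w
    using Re_s[OF that] by (auto simp: complex_eq_iff)
  have "H holomorphic_on - {0}"
    unfolding H_def s_def using den slit by (intro holomorphic_intros holo) (auto simp: s_def)
  moreover have "norm (H w) \<le> 1" if "w \<noteq> 0" for w
  proof -
    have "(cmod (s w - 1))\<^sup>2 \<le> (cmod (s w + 1))\<^sup>2"
      unfolding cmod_power2 using Re_s[OF that] by (simp add: power2_eq_square algebra_simps)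
    hence "cmod (s w - 1) \<le> cmod (s w + 1)" by (rule power2_le_imp_le) simp
    thus ?thesis using den[OF that] by (simp add: H_def norm_divide divide_le_eq_1)
  qed
  ultimately obtain K where K: "K holomorphic_on UNIV" "\<And>z. z \<noteq> 0 \<Longrightarrow> K z = H z"
    using holomorphic_on_extend_bounded[of H UNIV 0]
    by (auto simp: Compl_eq_Diff_UNIV eventually_at_filter intro!: always_eventually)
  have "((\<lambda>w. csqrt (G w)) \<longlongrightarrow> 1) at_infinity"
    using isCont_tendsto_compose[OF continuous_at_csqrt lim] by (simp add: complex_nonpos_Reals_iff)
  hence "(H \<longlongrightarrow> (1 - 1) / (1 + 1)) at_infinity"
    unfolding H_def s_def by (intro tendsto_intros) auto
  moreover have "eventually (\<lambda>z. H z = K z) at_infinity"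
    using eventually_at_infinity[of "\<lambda>z. H z = K z"] K(2) by (metis norm_zero zero_less_one not_le)
  ultimately have "(K \<longlongrightarrow> 0) at_infinity" by (simp add: Lim_transform_eventually)
  hence "H w = 0" using Liouville_weak_0[OF K(1)] K(2)[OF \<open>w \<noteq> 0\<close>] by simp
  thus "G w = 1"
    using den[OF \<open>w \<noteq> 0\<close>] by (simp add: H_def s_def)
qed

lemma remove_sings_divide_same_zorder:
  fixes f g :: "complex \<Rightarrow> complex"
  assumes f: "isolated_singularity_at f z" "not_essential f z" "\<exists>\<^sub>F w in at z. f w \<noteq> 0"
    and g: "isolated_singularity_at g z" "not_essential g z" "\<exists>\<^sub>F w in at z. g w \<noteq> 0"
    and same: "zorder f z = zorder g z"
  shows "remove_sings (\<lambda>w. f w / g w) analytic_on {z}" "remove_sings (\<lambda>w. f w / g w) z \<noteq> 0"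
proof -
  define hf hg where "hf = zor_poly f z" and "hg = zor_poly g z"
  obtain rf where rf: "hf z \<noteq> 0" "rf > 0" "hf holomorphic_on cball z rf"
      "\<And>w. w \<in> cball z rf - {z} \<Longrightarrow> f w = hf w * (w - z) powi zorder f z"
    using zorder_exist[OF f] unfolding hf_def by blast
  obtain rg where rg: "hg z \<noteq> 0" "rg > 0" "hg holomorphic_on cball z rg"
      "\<And>w. w \<in> cball z rg - {z} \<Longrightarrow> g w = hg w * (w - z) powi zorder g z"
    using zorder_exist[OF g] unfolding hg_def by blast
  have "isCont hf z" "isCont hg z"
    using rf(2,3) rg(2,3) by (metis centre_in_ball continuous_on_interior
        holomorphic_on_imp_continuous_on interior_cball)+
  hence "((\<lambda>w. hf w / hg w) \<longlongrightarrow> hf z / hg z) (at z)"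
    using rg(1) by (intro tendsto_intros) (auto simp: isCont_def)
  moreover have "eventually (\<lambda>w. hf w / hg w = f w / g w) (at z)"
  proof -
    have "eventually (\<lambda>w. w \<in> ball z (min rf rg) - {z}) (at z)"
      using rf(2) rg(2) by (intro eventually_at_in_open) auto
    thus ?thesis
      by eventually_elim (auto simp: rf(4) rg(4) same)
  qed
  ultimately have lim: "((\<lambda>w. f w / g w) \<longlongrightarrow> hf z / hg z) (at z)"
    by (rule Lim_transform_eventually)
  show "remove_sings (\<lambda>w. f w / g w) analytic_on {z}"
    by (intro remove_sings_analytic_at[OF _ lim] isolated_singularity_at_divide f g)
  show "remove_sings (\<lambda>w. f w / g w) z \<noteq> 0"
    using remove_sings_eqI[OF lim] rf(1) rg(1) by simp
qed

lemma pos_if_nonvanishing_eventually_pos: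
  fixes F :: "real \<Rightarrow> real"
  assumes cont: "continuous_on {a<..} F" and nz: "\<And>x. a < x \<Longrightarrow> F x \<noteq> 0"
    and ev: "eventually (\<lambda>x. F x > 0) at_top" and "a < x"
  shows "F x > 0"
proof (rule ccontr)
  assume "\<not> F x > 0"
  obtain y where "x \<le> y" "F y > 0"
    using ev by (metis eventually_at_top_linorder max.cobounded1 max.cobounded2)
  moreover have "continuous_on {x..y} F"
    using \<open>a < x\<close> by (intro continuous_on_subset[OF cont]) auto
  ultimately obtain c where "x \<le> c" "F c = 0"
    using IVT'[of F x 0 y] \<open>\<not> F x > 0\<close> by force
  thus False using nz \<open>a < x\<close> by simp
qed

lemma Phi_props_nonzero:
  assumes "Phi_props lam mu g" "w \<notin> sigma_set lam \<union> sigma_set mu"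
  shows "g w \<noteq> 0"
proof
  assume "g w = 0"
  hence "w \<in> range (\<lambda>k. complex_of_real ((mu k)\<^sup>2))"
    using assms unfolding Phi_props_def by blast
  thus False using assms(2) of_real_sq_in_sigma_set[of mu] by blast
qed

lemma eventually_not_in_sigma_sets:
  assumes "lam \<longlonglongrightarrow> 0" "mu \<longlonglongrightarrow> 0" "p \<noteq> 0"
  shows "\<forall>\<^sub>F w in at p. w \<notin> sigma_set lam \<union> sigma_set mu"
  using eventually_conj[OF eventually_not_in_sigma_set eventually_not_in_sigma_set] assms by simp

lemma Phi_props_isolated_nonessential:
  assumes "lam \<longlonglongrightarrow> 0" "mu \<longlonglongrightarrow> 0" "Phi_props lam mu g" "p \<noteq> 0"
  shows "isolated_singularity_at g p" "not_essential g p" "\<exists>\<^sub>F w in at p. g w \<noteq> 0"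
proof -
  have ev: "\<forall>\<^sub>F w in at p. w \<notin> sigma_set lam \<union> sigma_set mu"
    using eventually_not_in_sigma_sets assms by blast
  then obtain r where "r > 0" and r: "\<forall>w. w \<noteq> p \<and> dist w p < r \<longrightarrow> w \<notin> sigma_set lam \<union> sigma_set mu"
    unfolding eventually_at by blast
  hence "ball p r - {p} \<subseteq> - sigma_set lam" by (auto simp: dist_commute)
  have holo: "g holomorphic_on - sigma_set lam"
    using assms(3) by (simp add: Phi_props_def)
  show "isolated_singularity_at g p"
    by (rule isolated_singularity_at_holomorphic[OF holomorphic_on_subset[OF holo]])
       (use \<open>r > 0\<close> \<open>ball p r - {p} \<subseteq> - sigma_set lam\<close> in auto)
  show "\<exists>\<^sub>F w in at p. g w \<noteq> 0"
    using ev Phi_props_nonzero[OF assms(3)] by (auto intro: eventually_frequently elim!: eventually_mono)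
  show "not_essential g p"
  proof (cases "p \<in> sigma_set lam")
    case True
    then obtain k where "p = complex_of_real ((lam k)\<^sup>2)"
      using \<open>p \<noteq> 0\<close> by (auto simp: sigma_set_def)
    thus ?thesis using assms(3) by (simp add: Phi_props_def not_essential_def)
  next
    case False
    hence "isCont g p"
      using holo open_Compl_sigma_set[OF assms(1)]
      by (meson ComplI holomorphic_on_imp_continuous_on continuous_on_eq_continuous_at)
    thus ?thesis by (auto simp: not_essential_def isCont_def)
  qed
qed

lemma Phi_props_zorder_eq:
  assumes "lam \<longlonglongrightarrow> 0" "mu \<longlonglongrightarrow> 0" "Phi_props lam mu f" "Phi_props lam mu g" "p \<noteq> 0"
  shows "zorder f p = zorder g p"
proof -
  consider (pole) k where "p = complex_of_real ((lam k)\<^sup>2)"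
    | (zero) k where "p = complex_of_real ((mu k)\<^sup>2)"
    | (regular) "p \<notin> sigma_set lam \<union> sigma_set mu"
    using \<open>p \<noteq> 0\<close> unfolding sigma_set_def by blast
  thus ?thesis
  proof cases
    case regular
    have "zorder h p = 0" if "Phi_props lam mu h" for h
    proof (rule zorder_eq_0I)
      show "h analytic_on {p}"
        using that regular open_Compl_sigma_set[OF assms(1)] by (auto simp: Phi_props_def analytic_at)
      show "h p \<noteq> 0" by (rule Phi_props_nonzero[OF that regular])
    qed
    thus ?thesis using assms(3,4) by simp
  qed (use assms(3,4) in \<open>simp_all add: Phi_props_def\<close>)
qed

locale Phi_props_pair =
  fixes lam mu :: "nat \<Rightarrow> real" and f g :: "complex \<Rightarrow> complex"
  assumes lam_lim: "lam \<longlonglongrightarrow> 0" and mu_lim: "mu \<longlonglongrightarrow> 0"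
    and f_props: "Phi_props lam mu f" and g_props: "Phi_props lam mu g"
begin

definition ratio :: "complex \<Rightarrow> complex" where
  "ratio = remove_sings (\<lambda>w. f w / g w)"

lemma open_Compl_sigma_sets: "open (- (sigma_set lam \<union> sigma_set mu))"
  using closed_sigma_set[OF lam_lim] closed_sigma_set[OF mu_lim] by blast

lemma ratio_analytic_nonzero:
  assumes "p \<noteq> 0"
  shows "ratio analytic_on {p}" "ratio p \<noteq> 0"
  using remove_sings_divide_same_zorder[OF
      Phi_props_isolated_nonessential[OF lam_lim mu_lim f_props assms]
      Phi_props_isolated_nonessential[OF lam_lim mu_lim g_props assms]
      Phi_props_zorder_eq[OF lam_lim mu_lim f_props g_props assms]]
  unfolding ratio_def by blast+

lemma isCont_ratio: "p \<noteq> 0 \<Longrightarrow> isCont ratio p"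
  using ratio_analytic_nonzero(1) by (rule analytic_at_imp_isCont)

lemma holomorphic_ratio: "ratio holomorphic_on - {0}"
proof (rule analytic_imp_holomorphic)
  show "ratio analytic_on - {0}"
    using ratio_analytic_nonzero(1) analytic_on_analytic_at by blast
qed

lemma ratio_eq:
  assumes "w \<notin> sigma_set lam \<union> sigma_set mu"
  shows "ratio w = f w / g w"
proof -
  have "h analytic_on {w}" if "Phi_props lam mu h" for h
    using that assms open_Compl_sigma_sets
    by (auto simp: Phi_props_def analytic_at intro!: exI[of _ "- (sigma_set lam \<union> sigma_set mu)"]
        elim: holomorphic_on_subset)
  hence "(\<lambda>w. f w / g w) analytic_on {w}"
    using f_props g_props Phi_props_nonzero[OF g_props assms] by (auto intro!: analytic_intros)
  thus ?thesis unfolding ratio_def by simp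
qed

lemma ratio_tendsto_1: "(ratio \<longlongrightarrow> 1) at_infinity"
proof -
  have "((\<lambda>w. f w / g w) \<longlongrightarrow> 1 / 1) at_infinity"
    using f_props g_props by (intro tendsto_divide) (auto simp: Phi_props_def)
  moreover obtain B where "\<And>w. w \<in> sigma_set lam \<union> sigma_set mu \<Longrightarrow> norm w \<le> B"
    using compact_imp_bounded[OF compact_Un[OF compact_sigma_set[OF lam_lim] compact_sigma_set[OF mu_lim]]]
    by (auto simp: bounded_iff)
  hence "\<forall>\<^sub>F w in at_infinity. f w / g w = ratio w"
    unfolding eventually_at_infinity by (metis gt_ex le_less_trans not_le ratio_eq)
  ultimately show ?thesis by (simp add: Lim_transform_eventually)
qed

lemma ratio_cnj:
  assumes "w \<notin> sigma_set lam \<union> sigma_set mu"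
  shows "ratio (cnj w) = cnj (ratio w)"
proof -
  have cw: "cnj w \<notin> sigma_set lam \<union> sigma_set mu"
    using assms by (simp add: cnj_in_sigma_set_iff)
  have "h (cnj w) = cnj (h w)" if "Phi_props lam mu h" for h
    using that assms unfolding Phi_props_def by blast
  thus ?thesis using ratio_eq[OF assms] ratio_eq[OF cw] f_props g_props by simp
qed

lemma Im_ratio_of_real:
  assumes "t \<noteq> 0"
  shows "Im (ratio (complex_of_real t)) = 0"
proof -
  obtain d where "d > 0" and d: "\<And>w. w \<noteq> complex_of_real t \<Longrightarrow> dist w (complex_of_real t) < d
      \<Longrightarrow> w \<notin> sigma_set lam \<union> sigma_set mu"
    using eventually_not_in_sigma_sets[OF lam_lim mu_lim, of "complex_of_real t"] assms
    unfolding eventually_at by auto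
  have "Im (ratio (complex_of_real x)) = 0" if "x \<noteq> t" "dist x t < d" for x
    using that ratio_cnj[of "complex_of_real x"] d[of "complex_of_real x"]
    by (auto simp: dist_of_real complex_eq_iff)
  hence ev: "\<forall>\<^sub>F x in at t. Im (ratio (complex_of_real x)) = 0"
    unfolding eventually_at using \<open>d > 0\<close> by blast
  have "isCont (\<lambda>x. Im (ratio (complex_of_real x))) t"
    using assms by (intro continuous_Im isCont_o2[OF continuous_of_real[OF continuous_ident]] isCont_ratio) simp
  thus ?thesis
    by (rule tendsto_unique[OF at_neq_bot isContD tendsto_eventually[OF ev]])
qed

lemma ratio_upper_half:
  assumes "Im w > 0"
  shows "ratio w \<notin> \<real>\<^sub>\<le>\<^sub>0"
proof
  assume "ratio w \<in> \<real>\<^sub>\<le>\<^sub>0"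
  hence "Re (ratio w) \<le> 0" "Im (ratio w) = 0" by (auto simp: complex_nonpos_Reals_iff)
  define x where "x = Re (ratio w)"
  have "x \<le> 0" "ratio w = complex_of_real x"
    using \<open>Re (ratio w) \<le> 0\<close> \<open>Im (ratio w) = 0\<close> by (simp_all add: x_def complex_eq_iff)
  have w: "w \<notin> sigma_set lam \<union> sigma_set mu"
    using assms Im_sigma_set by fastforce
  hence "f w = complex_of_real x * g w"
    using ratio_eq[OF w] Phi_props_nonzero[OF g_props w] \<open>ratio w = _\<close> by (simp add: field_simps)
  hence "Im (f w) = x * Im (g w)" by simp
  moreover have "Im (f w) < 0" "Im (g w) < 0"
    using f_props g_props assms by (auto simp: Phi_props_def)
  ultimately show False using mult_nonpos_nonpos[OF \<open>x \<le> 0\<close>, of "Im (g w)"] by linarith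
qed

lemma ratio_lower_half:
  assumes "Im w < 0"
  shows "ratio w \<notin> \<real>\<^sub>\<le>\<^sub>0"
proof -
  have "cnj w \<notin> sigma_set lam \<union> sigma_set mu"
    using assms Im_sigma_set by fastforce
  hence "ratio w = cnj (ratio (cnj w))"
    using ratio_cnj by fastforce
  moreover have "ratio (cnj w) \<notin> \<real>\<^sub>\<le>\<^sub>0"
    using ratio_upper_half assms by simp
  ultimately show ?thesis by (simp add: complex_nonpos_Reals_iff)
qed

lemma Re_ratio_of_real_pos:
  assumes "t \<noteq> 0"
  shows "Re (ratio (complex_of_real t)) > 0"
proof -
  define s where "s = sgn t"
  have s: "s \<noteq> 0" "\<bar>s\<bar> = 1" using assms by (auto simp: s_def sgn_if)
  define F where "F = (\<lambda>x. Re (ratio (complex_of_real (s * x))))"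
  have "F x > 0" if "x > 0" for x
  proof (rule pos_if_nonvanishing_eventually_pos[of 0 F])
    have "isCont F x" if "x > 0" for x
      unfolding F_def using s that
      by (intro continuous_Re isCont_o2[OF continuous_of_real[OF continuous_mult_left[OF continuous_ident]]]
          isCont_ratio) simp
    thus "continuous_on {0<..} F"
      by (intro continuous_at_imp_continuous_on) auto
    show "F x \<noteq> 0" if "x > 0" for x
      using ratio_analytic_nonzero(2)[of "complex_of_real (s * x)"] Im_ratio_of_real[of "s * x"] s that
      by (auto simp: F_def complex_eq_iff)
    have "filterlim (\<lambda>x. complex_of_real (s * x)) at_infinity at_top"
      unfolding filterlim_at_infinity_conv_norm_at_top
      by (simp add: abs_mult s filterlim_abs_real del: of_real_mult)
    hence "((\<lambda>x. ratio (complex_of_real (s * x))) \<longlongrightarrow> 1) at_top"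
      by (rule filterlim_compose[OF ratio_tendsto_1])
    hence "(F \<longlongrightarrow> 1) at_top"
      unfolding F_def by (metis one_complex.sel(1) tendsto_Re)
    thus "\<forall>\<^sub>F x in at_top. F x > 0"
      by (rule order_tendstoD) simp
  qed (use that in auto)
  moreover have "s * \<bar>t\<bar> = t" by (simp add: s_def sgn_mult_abs)
  ultimately show ?thesis
    using assms unfolding F_def by (metis zero_less_abs_iff)
qed

lemma ratio_not_nonpos_Reals:
  assumes "w \<noteq> 0"
  shows "ratio w \<notin> \<real>\<^sub>\<le>\<^sub>0"
proof (cases "Im w" "0::real" rule: linorder_cases)
  case equal
  hence "w = complex_of_real (Re w)" "Re w \<noteq> 0"
    using assms by (simp_all add: complex_eq_iff)
  thus ?thesis
    using Re_ratio_of_real_pos[of "Re w"] by (metis complex_nonpos_Reals_iff not_le)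
qed (use ratio_lower_half ratio_upper_half in auto)

theorem Phi_props_unique:
  assumes "z \<notin> sigma_set lam"
  shows "f z = g z"
proof (cases "z \<in> sigma_set mu")
  case True
  hence "z \<in> range (\<lambda>k. complex_of_real ((mu k)\<^sup>2))"
    using assms zero_in_sigma_set[of lam] by (auto simp: sigma_set_def)
  hence "f z = 0" "g z = 0"
    using f_props g_props assms unfolding Phi_props_def by blast+
  thus ?thesis by simp
next
  case False
  hence z: "z \<notin> sigma_set lam \<union> sigma_set mu" using assms by blast
  have "z \<noteq> 0" using assms zero_in_sigma_set by metis
  hence "ratio z = 1"
    using Liouville_slit_punctured[OF holomorphic_ratio ratio_not_nonpos_Reals ratio_tendsto_1] by blast
  thus ?thesis using ratio_eq[OF z] Phi_props_nonzero[OF g_props z] by simp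
qed

end

theorem lemma4p6:
  fixes lam mu :: "nat \<Rightarrow> real"
  assumes nz: "\<And>k. lam k \<noteq> 0" "\<And>k. mu k \<noteq> 0"
    and inter1: "\<And>k. \<bar>lam k\<bar> > \<bar>mu k\<bar>"
    and inter2: "\<And>k. \<bar>mu k\<bar> > \<bar>lam (Suc k)\<bar>"
    and lim: "lam \<longlonglongrightarrow> 0"
  shows "Phi_props lam mu (Phi lam mu) \<and>
         (\<forall>f. Phi_props lam mu f \<longrightarrow> (\<forall>z \<in> - sigma_set lam. f z = Phi lam mu z))"
proof -
  interpret interlacing lam mu
    using assms by unfold_locales auto
  have "f z = Phi lam mu z" if "Phi_props lam mu f" "z \<notin> sigma_set lam" for f z
    by (rule Phi_props_pair.Phi_props_unique[OF
          Phi_props_pair.intro[OF lam_tendsto_0 mu_tendsto_0 that(1) Phi_props_Phi] that(2)])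
  thus ?thesis using Phi_props_Phi by blast
qed

end
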